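(* Consider the system \[ \begin{aligned} \dot S_h(t)&=\beta_h-C_{vh}\frac{I_v(t)}{N_v(t)}S_h(t)-\mu_hS_h(t),\\ \dot I_h(t)&=C_{vh}\frac{I_v(t-\tau)}{N_v(t-\tau)}S_h(t-\tau)-\mu_hI_h(t),\\ \dot S_v(t)&=\beta_v-C_{hv}I_h(t)S_v(t)-\mu_vS_v(t),\\ \dot I_v(t)&=C_{hv}I_h(t)S_v(t)-\mu_vI_v(t), \end{aligned} \] with $N_v=S_v+I_v$ and positive parameters $\beta_h,\beta_v,\mu_h,\mu_v,C_{vh},C_{hv}$, on the phase space $C_+$. Let $E^0=(\beta_h/\mu_h,0,\beta_v/\mu_v,0)^T$ and $R_0=\sqrt{C_{vh}C_{hv}\beta_h/(\mu_h^2\mu_v)}$. Then for any $\tau\ge0$, $E^0$ is globally asymptotically stable in $C_+$ if $R_0<1$, and globally attractive in $C_+$ if $R_0=1$.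
   Context: $C_+=\{\varphi\in C([-\tau,0],\mathbb{R}_+^4):\varphi_3(\theta)+\varphi_4(\theta)>0\ \forall\theta\in[-\tau,0]\}$ with the sup-norm; the constant function $E^0$ is regarded as an element of $C_+$. Globally attractive means every solution with initial function in $C_+$ converges to $E^0$; globally asymptotically stable means locally (Lyapunov) stable and globally attractive. *)

theory Defs
  imports "HOL-Analysis.Analysis"
begin

text \<open>State vector x = (S_h, I_h, S_v, I_v) as an element of real^4,
  components x$1 = S_h, x$2 = I_h, x$3 = S_v, x$4 = I_v.\<close>

definition E0 :: "real \<Rightarrow> real \<Rightarrow> real \<Rightarrow> real \<Rightarrow> real^4" where
  "E0 \<beta>h \<mu>h \<beta>v \<mu>v = vector [\<beta>h / \<mu>h, 0, \<beta>v / \<mu>v, 0]"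

definition R0 :: "real \<Rightarrow> real \<Rightarrow> real \<Rightarrow> real \<Rightarrow> real \<Rightarrow> real" where
  "R0 \<beta>h \<mu>h \<mu>v Cvh Chv = sqrt (Cvh * Chv * \<beta>h / (\<mu>h\<^sup>2 * \<mu>v))"

text \<open>Right-hand side of the delay system: x is the current state x(t),
  y is the delayed state x(t - tau).\<close>
definition vf :: "real \<Rightarrow> real \<Rightarrow> real \<Rightarrow> real \<Rightarrow> real \<Rightarrow> real \<Rightarrow> real^4 \<Rightarrow> real^4 \<Rightarrow> real^4" where
  "vf \<beta>h \<beta>v \<mu>h \<mu>v Cvh Chv x y = vector [
     \<beta>h - Cvh * (x$4 / (x$3 + x$4)) * x$1 - \<mu>h * x$1,
     Cvh * (y$4 / (y$3 + y$4)) * y$1 - \<mu>h * x$2,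
     \<beta>v - Chv * x$2 * x$3 - \<mu>v * x$3,
     Chv * x$2 * x$3 - \<mu>v * x$4]"

text \<open>The phase space C_+ (values outside [-tau,0] are irrelevant).\<close>
definition Cplus :: "real \<Rightarrow> (real \<Rightarrow> real^4) set" where
  "Cplus \<tau> = {\<phi>. continuous_on {-\<tau>..0} \<phi> \<and>
      (\<forall>\<theta>\<in>{-\<tau>..0}. (\<forall>i. 0 \<le> \<phi> \<theta> $ i) \<and> 0 < \<phi> \<theta> $ 3 + \<phi> \<theta> $ 4)}"

definition supdist :: "real \<Rightarrow> (real \<Rightarrow> real^4) \<Rightarrow> (real \<Rightarrow> real^4) \<Rightarrow> real" where
  "supdist \<tau> \<phi> \<psi> = (SUP \<theta>\<in>{-\<tau>..0}. norm (\<phi> \<theta> - \<psi> \<theta>))"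

definition is_solution ::
  "real \<Rightarrow> real \<Rightarrow> real \<Rightarrow> real \<Rightarrow> real \<Rightarrow> real \<Rightarrow> real \<Rightarrow> (real \<Rightarrow> real^4) \<Rightarrow> (real \<Rightarrow> real^4) \<Rightarrow> bool" where
  "is_solution \<beta>h \<beta>v \<mu>h \<mu>v Cvh Chv \<tau> \<phi> x \<longleftrightarrow>
     continuous_on {-\<tau>..} x \<and>
     (\<forall>\<theta>\<in>{-\<tau>..0}. x \<theta> = \<phi> \<theta>) \<and>
     (\<forall>t\<ge>0. (x has_vector_derivative vf \<beta>h \<beta>v \<mu>h \<mu>v Cvh Chv (x t) (x (t - \<tau>))) (at t within {0..}))"

definition globally_attractive ::
  "real \<Rightarrow> real \<Rightarrow> real \<Rightarrow> real \<Rightarrow> real \<Rightarrow> real \<Rightarrow> real \<Rightarrow> bool" where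
  "globally_attractive \<beta>h \<beta>v \<mu>h \<mu>v Cvh Chv \<tau> \<longleftrightarrow>
     (\<forall>\<phi>\<in>Cplus \<tau>. \<forall>x. is_solution \<beta>h \<beta>v \<mu>h \<mu>v Cvh Chv \<tau> \<phi> x \<longrightarrow>
        (x \<longlongrightarrow> E0 \<beta>h \<mu>h \<beta>v \<mu>v) at_top)"

definition locally_stable ::
  "real \<Rightarrow> real \<Rightarrow> real \<Rightarrow> real \<Rightarrow> real \<Rightarrow> real \<Rightarrow> real \<Rightarrow> bool" where
  "locally_stable \<beta>h \<beta>v \<mu>h \<mu>v Cvh Chv \<tau> \<longleftrightarrow>
     (\<forall>\<epsilon>>0. \<exists>\<delta>>0. \<forall>\<phi>\<in>Cplus \<tau>. \<forall>x.
        supdist \<tau> \<phi> (\<lambda>_. E0 \<beta>h \<mu>h \<beta>v \<mu>v) < \<delta> \<longrightarrow>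
        is_solution \<beta>h \<beta>v \<mu>h \<mu>v Cvh Chv \<tau> \<phi> x \<longrightarrow>
        (\<forall>t\<ge>0. norm (x t - E0 \<beta>h \<mu>h \<beta>v \<mu>v) < \<epsilon>))"

definition globally_asymptotically_stable ::
  "real \<Rightarrow> real \<Rightarrow> real \<Rightarrow> real \<Rightarrow> real \<Rightarrow> real \<Rightarrow> real \<Rightarrow> bool" where
  "globally_asymptotically_stable \<beta>h \<beta>v \<mu>h \<mu>v Cvh Chv \<tau> \<longleftrightarrow>
     locally_stable \<beta>h \<beta>v \<mu>h \<mu>v Cvh Chv \<tau> \<and> globally_attractive \<beta>h \<beta>v \<mu>h \<mu>v Cvh Chv \<tau>"

end

theory Submission
  imports Defs
begin

(*
  Write A = beta_h/mu_h and N = beta_v/mu_v for the equilibrium values of S_h and N_v = S_v + I_v.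
  N_v satisfies N_v' = beta_v - mu_v N_v, so it converges monotonically to N, and S_h is
  asymptotically below A. Solutions stay nonnegative: no component of x(t) + eta e^(K t) can be
  the first to reach 0 when K dominates the negative terms of the vector field; then let eta -> 0.

  Attractivity: comparison with linear differential inequalities turns an asymptotic bound
  limsup I_v <= L into limsup I_h <= C_vh L A / (mu_h N), and that into limsup I_v <= F(L) with
  F(L) = h N / (h + mu_v), h = C_hv C_vh L A / (mu_h N). If R_0 <= 1 then F(L) < L for every
  L > 0, so the least asymptotic bound for I_v is 0; it follows that I_h -> 0, S_v -> N and
  S_h -> A.

  Stability for R_0 < 1: choose kappa strictly between C_vh A / (mu_h N) and mu_v / (C_hv N).
  For initial data close to E^0 the box I_h < kappa m, I_v < m is forward invariant (again a
  barrier argument), and meanwhile S_h and N_v stay within O(m) of A and N.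
*)

section \<open>Asymptotic bounds at infinity\<close>

definition limsup_le :: "(real \<Rightarrow> real) \<Rightarrow> real \<Rightarrow> bool" where
  "limsup_le y c \<longleftrightarrow> (\<forall>\<eta>>0. eventually (\<lambda>t. y t \<le> c + \<eta>) at_top)"

definition liminf_ge :: "(real \<Rightarrow> real) \<Rightarrow> real \<Rightarrow> bool" where
  "liminf_ge y c \<longleftrightarrow> (\<forall>\<eta>>0. eventually (\<lambda>t. c - \<eta> \<le> y t) at_top)"

lemma liminf_ge_iff_limsup_le_uminus: "liminf_ge y c \<longleftrightarrow> limsup_le (\<lambda>t. - y t) (- c)"
  unfolding liminf_ge_def limsup_le_def by (simp add: algebra_simps)

lemma limsup_le_if_eventually_le: "eventually (\<lambda>t. y t \<le> c) at_top \<Longrightarrow> limsup_le y c"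
  unfolding limsup_le_def by (auto elim: eventually_mono)

lemma liminf_ge_if_eventually_ge: "eventually (\<lambda>t. c \<le> y t) at_top \<Longrightarrow> liminf_ge y c"
  unfolding liminf_ge_def by (auto elim: eventually_mono)

lemma limsup_le_mono: "limsup_le y a \<Longrightarrow> a \<le> c \<Longrightarrow> limsup_le y c"
  unfolding limsup_le_def by (fastforce elim: eventually_mono)

lemma tendsto_iff_limsup_le_liminf_ge:
  "(y \<longlongrightarrow> c) at_top \<longleftrightarrow> limsup_le y c \<and> liminf_ge y c"
proof
  assume y: "(y \<longlongrightarrow> c) at_top"
  have "eventually (\<lambda>t. y t \<le> c + \<eta>) at_top \<and> eventually (\<lambda>t. c - \<eta> \<le> y t) at_top"
    if "0 < \<eta>" for \<eta>
    using order_tendstoD(2)[OF y, of "c + \<eta>"] order_tendstoD(1)[OF y, of "c - \<eta>"] that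
    by (auto elim: eventually_mono)
  then show "limsup_le y c \<and> liminf_ge y c"
    unfolding limsup_le_def liminf_ge_def by blast
next
  assume bounds: "limsup_le y c \<and> liminf_ge y c"
  show "(y \<longlongrightarrow> c) at_top"
  proof (rule order_tendstoI)
    fix a assume "a < c"
    then have "eventually (\<lambda>t. c - (c - a) / 2 \<le> y t) at_top"
      using bounds unfolding liminf_ge_def by simp
    then show "eventually (\<lambda>t. a < y t) at_top"
    proof (rule eventually_mono)
      fix t assume "c - (c - a) / 2 \<le> y t"
      moreover have "a < c - (c - a) / 2" using \<open>a < c\<close> by (simp add: field_simps)
      ultimately show "a < y t" by linarith
    qed
  next
    fix a assume "c < a"
    then have "eventually (\<lambda>t. y t \<le> c + (a - c) / 2) at_top"
      using bounds unfolding limsup_le_def by simp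
    then show "eventually (\<lambda>t. y t < a) at_top"
    proof (rule eventually_mono)
      fix t assume "y t \<le> c + (a - c) / 2"
      moreover have "c + (a - c) / 2 < a" using \<open>c < a\<close> by (simp add: field_simps)
      ultimately show "y t < a" by linarith
    qed
  qed
qed

lemma liminf_ge_le_limsup_le: "liminf_ge y a \<Longrightarrow> limsup_le y c \<Longrightarrow> a \<le> c"
proof (rule field_le_epsilon)
  fix \<eta> :: real assume "liminf_ge y a" "limsup_le y c" "0 < \<eta>"
  then have "eventually (\<lambda>t. a - \<eta>/2 \<le> y t \<and> y t \<le> c + \<eta>/2) at_top"
    unfolding liminf_ge_def limsup_le_def by (auto intro: eventually_conj)
  then obtain T where "\<And>t. T \<le> t \<Longrightarrow> a - \<eta>/2 \<le> y t \<and> y t \<le> c + \<eta>/2"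
    unfolding eventually_at_top_linorder by blast
  then have "a - \<eta>/2 \<le> y T" "y T \<le> c + \<eta>/2" by auto
  then show "a \<le> c + \<eta>" by linarith
qed

lemma limsup_le_if_greater:
  assumes "\<And>c'. c < c' \<Longrightarrow> limsup_le y c'"
  shows "limsup_le y c"
  unfolding limsup_le_def
proof (intro allI impI)
  fix \<eta> :: real assume "0 < \<eta>"
  then have "limsup_le y (c + \<eta>/2)" using assms by simp
  then have "eventually (\<lambda>t. y t \<le> (c + \<eta>/2) + \<eta>/2) at_top"
    using \<open>0 < \<eta>\<close> unfolding limsup_le_def by (meson half_gt_zero)
  then show "eventually (\<lambda>t. y t \<le> c + \<eta>) at_top" by (simp add: add.commute)
qed

lemma limsup_le_limit:
  assumes "F \<noteq> bot" and bounds: "eventually (\<lambda>\<epsilon>. limsup_le y (G \<epsilon>)) F" and G: "(G \<longlongrightarrow> g) F"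
  shows "limsup_le y g"
proof (rule limsup_le_if_greater)
  fix c assume "g < c"
  then have "eventually (\<lambda>\<epsilon>. limsup_le y (G \<epsilon>) \<and> G \<epsilon> < c) F"
    using eventually_conj[OF bounds order_tendstoD(2)[OF G]] by simp
  then obtain \<epsilon> where "limsup_le y (G \<epsilon>)" "G \<epsilon> < c"
    using eventually_happens' \<open>F \<noteq> bot\<close> by blast
  then show "limsup_le y c" by (auto intro: limsup_le_mono)
qed

lemma liminf_ge_limit:
  assumes "F \<noteq> bot" and "eventually (\<lambda>\<epsilon>. liminf_ge y (G \<epsilon>)) F" and "(G \<longlongrightarrow> g) F"
  shows "liminf_ge y g"
  using limsup_le_limit[of F "\<lambda>t. - y t" "\<lambda>\<epsilon>. - G \<epsilon>" "- g"] assms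
  by (simp add: liminf_ge_iff_limsup_le_uminus tendsto_minus)

lemma limsup_le_zero_of_contraction:
  fixes F :: "real \<Rightarrow> real"
  assumes "limsup_le y M" and "liminf_ge y 0"
    and step: "\<And>L. 0 \<le> L \<Longrightarrow> limsup_le y L \<Longrightarrow> limsup_le y (F L)"
    and contraction: "\<And>L. 0 < L \<Longrightarrow> F L < L"
  shows "limsup_le y 0"
proof -
  define D where "D = {L. limsup_le y L}"
  have nonneg: "0 \<le> L" if "L \<in> D" for L
    using liminf_ge_le_limsup_le[OF \<open>liminf_ge y 0\<close>] that unfolding D_def by simp
  have "M \<in> D" using \<open>limsup_le y M\<close> unfolding D_def by simp
  have "bdd_below D" by (rule bdd_belowI[of _ 0]) (rule nonneg)
  define L where "L = Inf D"
  have "0 \<le> L" unfolding L_def using \<open>M \<in> D\<close> nonneg by (intro cInf_greatest) auto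
  have "limsup_le y L"
  proof (rule limsup_le_if_greater)
    fix c assume "L < c"
    then obtain c' where "c' \<in> D" "c' < c"
      using cInf_lessD[of D c] \<open>M \<in> D\<close> unfolding L_def by blast
    then show "limsup_le y c" unfolding D_def by (auto intro: limsup_le_mono)
  qed
  then have "F L \<in> D" using step[OF \<open>0 \<le> L\<close>] unfolding D_def by simp
  then have "L \<le> F L" unfolding L_def using \<open>bdd_below D\<close> by (rule cInf_lower)
  then have "L = 0" using contraction[of L] \<open>0 \<le> L\<close> by linarith
  then show ?thesis using \<open>limsup_le y L\<close> by simp
qed

lemma eventually_at_top_shift:
  fixes \<tau> :: real
  assumes "eventually P at_top"
  shows "eventually (\<lambda>t. P (t - \<tau>)) at_top"
proof -
  obtain T where "\<And>t. T \<le> t \<Longrightarrow> P t" using assms unfolding eventually_at_top_linorder by blast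
  then show ?thesis unfolding eventually_at_top_linorder by (intro exI[of _ "T + \<tau>"]) simp
qed

section \<open>Linear differential inequalities\<close>

lemma tendsto_exp_decay:
  fixes q :: real assumes "0 < q"
  shows "((\<lambda>t. c * exp (- (q * (t - T)))) \<longlongrightarrow> 0) at_top"
proof -
  have "filterlim (\<lambda>t. t - T) at_top at_top"
    using filterlim_tendsto_add_at_top[OF tendsto_const[of "- T"] filterlim_ident] by simp
  then have "filterlim (\<lambda>t. q * (t - T)) at_top at_top"
    using assms by (intro filterlim_tendsto_pos_mult_at_top[OF tendsto_const])
  then have "filterlim (\<lambda>t. - (q * (t - T))) at_bot at_top"
    by (simp add: filterlim_uminus_at_top)
  then have "((\<lambda>t. exp (- (q * (t - T)))) \<longlongrightarrow> 0) at_top"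
    using exp_at_bot filterlim_compose by blast
  then show ?thesis by (rule tendsto_mult_right_zero)
qed

lemma linear_ode_upper_bound:
  fixes y y' :: "real \<Rightarrow> real"
  assumes cont: "continuous_on {T..} y" and "0 < q"
    and deriv: "\<And>t. T < t \<Longrightarrow> (y has_real_derivative y' t) (at t)"
    and ineq: "\<And>t. T < t \<Longrightarrow> y' t \<le> p - q * y t"
    and "T \<le> t"
  shows "y t \<le> p/q + (y T - p/q) * exp (- (q * (t - T)))"
proof -
  define z where "z u = (y u - p/q) * exp (q * u)" for u
  have "z t \<le> z T"
  proof (rule DERIV_nonpos_imp_decreasing_open[OF \<open>T \<le> t\<close>])
    fix s assume s: "T < s" "s < t"
    have "(z has_real_derivative exp (q * s) * (y' s + q * y s - p)) (at s)"
      unfolding z_def using deriv[of s] s \<open>0 < q\<close>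
      by (auto intro!: derivative_eq_intros simp: field_simps)
    moreover have "exp (q * s) * (y' s + q * y s - p) \<le> 0"
      using ineq[of s] s by (simp add: mult_nonneg_nonpos)
    ultimately show "\<exists>l. (z has_real_derivative l) (at s) \<and> l \<le> 0" by blast
  next
    show "continuous_on {T..t} z"
      unfolding z_def by (intro continuous_intros continuous_on_subset[OF cont]) auto
  qed
  then have "y t - p/q \<le> (y T - p/q) * exp (q * T) / exp (q * t)"
    by (simp add: z_def pos_le_divide_eq)
  also have "\<dots> = (y T - p/q) * exp (- (q * (t - T)))"
    by (simp add: exp_diff right_diff_distrib)
  finally show ?thesis by simp
qed

lemma linear_ode_solution:
  fixes y y' :: "real \<Rightarrow> real"
  assumes cont: "continuous_on {T..} y" and "0 < q"
    and deriv: "\<And>t. T < t \<Longrightarrow> (y has_real_derivative p - q * y t) (at t)"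
    and "T \<le> t"
  shows "y t = p/q + (y T - p/q) * exp (- (q * (t - T)))"
proof (rule antisym)
  show "y t \<le> p/q + (y T - p/q) * exp (- (q * (t - T)))"
    using linear_ode_upper_bound[OF cont \<open>0 < q\<close> deriv] \<open>T \<le> t\<close> by simp
  have "((\<lambda>t. - y t) has_real_derivative - (p - q * y s)) (at s)" if "T < s" for s
    using DERIV_minus[OF deriv[OF that]] .
  then have "- y t \<le> (- p)/q + (- y T - (- p)/q) * exp (- (q * (t - T)))"
    using \<open>T \<le> t\<close> by (intro linear_ode_upper_bound[OF continuous_on_minus[OF cont] \<open>0 < q\<close>]) auto
  then show "p/q + (y T - p/q) * exp (- (q * (t - T))) \<le> y t"
    by (simp add: algebra_simps)
qed

lemma limsup_le_linear_ode:
  fixes y y' :: "real \<Rightarrow> real"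
  assumes "0 < q"
    and ode: "eventually (\<lambda>t. (y has_real_derivative y' t) (at t) \<and> y' t \<le> p - q * y t) at_top"
  shows "limsup_le y (p / q)"
  unfolding limsup_le_def
proof (intro allI impI)
  fix \<eta> :: real assume "0 < \<eta>"
  obtain T where T: "\<And>t. T \<le> t \<Longrightarrow> (y has_real_derivative y' t) (at t) \<and> y' t \<le> p - q * y t"
    using ode unfolding eventually_at_top_linorder by blast
  have "continuous_on {T..} y"
    using T by (meson DERIV_isCont atLeast_iff continuous_at_imp_continuous_on)
  then have bound: "y t \<le> p/q + (y T - p/q) * exp (- (q * (t - T)))" if "T \<le> t" for t
    using linear_ode_upper_bound[OF _ \<open>0 < q\<close>, of T y y' p t] T that by auto
  have "eventually (\<lambda>t. (y T - p/q) * exp (- (q * (t - T))) < \<eta> \<and> T \<le> t) at_top"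
    using order_tendstoD(2)[OF tendsto_exp_decay[OF \<open>0 < q\<close>] \<open>0 < \<eta>\<close>]
    by (intro eventually_conj eventually_ge_at_top)
  then show "eventually (\<lambda>t. y t \<le> p / q + \<eta>) at_top"
  proof eventually_elim
    case (elim t)
    then show ?case using bound[of t] by linarith
  qed
qed

lemma liminf_ge_linear_ode:
  fixes y y' :: "real \<Rightarrow> real"
  assumes "0 < q"
    and ode: "eventually (\<lambda>t. (y has_real_derivative y' t) (at t) \<and> p - q * y t \<le> y' t) at_top"
  shows "liminf_ge y (p / q)"
proof -
  have "eventually (\<lambda>t. ((\<lambda>t. - y t) has_real_derivative - y' t) (at t) \<and> - y' t \<le> - p - q * - y t) at_top"
    using ode by eventually_elim (simp add: DERIV_minus)
  from limsup_le_linear_ode[OF \<open>0 < q\<close> this] show ?thesis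
    by (simp add: liminf_ge_iff_limsup_le_uminus)
qed

section \<open>A barrier principle\<close>

lemma first_zero_time:
  fixes g :: "'i \<Rightarrow> real \<Rightarrow> real"
  assumes "finite I"
    and cont: "\<And>j. j \<in> I \<Longrightarrow> continuous_on {0..T} (g j)"
    and init: "\<And>j. j \<in> I \<Longrightarrow> 0 < g j 0"
    and "i \<in> I" "t \<in> {0..T}" "g i t \<le> 0"
  obtains i0 t0 where "i0 \<in> I" "0 < t0" "t0 \<le> T" "g i0 t0 = 0"
    and "\<And>j s. j \<in> I \<Longrightarrow> s \<in> {0..<t0} \<Longrightarrow> 0 < g j s"
    and "\<And>j s. j \<in> I \<Longrightarrow> s \<in> {0..t0} \<Longrightarrow> 0 \<le> g j s"
proof -
  define S where "S = (\<Union>j\<in>I. {0..T} \<inter> g j -` {..0})"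
  have "closed ({0..T} \<inter> g j -` {..0})" if "j \<in> I" for j
    using continuous_closed_preimage[OF cont[OF that]] by simp
  then have "closed S" unfolding S_def using \<open>finite I\<close> by (intro closed_UN) auto
  moreover have "t \<in> S" using \<open>g i t \<le> 0\<close> \<open>i \<in> I\<close> \<open>t \<in> {0..T}\<close> unfolding S_def by force
  moreover have "bdd_below S" unfolding S_def by (rule bdd_belowI[of _ 0]) auto
  ultimately have "Inf S \<in> S" by (intro closed_contains_Inf) auto
  define t0 where "t0 = Inf S"
  have "t0 \<in> S" unfolding t0_def by fact
  then obtain i0 where "i0 \<in> I" "t0 \<in> {0..T}" "g i0 t0 \<le> 0"
    unfolding S_def by blast
  have before: "0 < g j s" if "j \<in> I" "s \<in> {0..<t0}" for j s
  proof (rule ccontr)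
    assume "\<not> 0 < g j s"
    then have "s \<in> S" using that \<open>t0 \<in> {0..T}\<close> unfolding S_def by force
    then have "t0 \<le> s" unfolding t0_def using \<open>bdd_below S\<close> by (rule cInf_lower)
    then show False using that by simp
  qed
  have "t0 \<noteq> 0" using init[OF \<open>i0 \<in> I\<close>] \<open>g i0 t0 \<le> 0\<close> by auto
  then have "0 < t0" using \<open>t0 \<in> {0..T}\<close> by simp
  have at_t0: "0 \<le> g j t0" if "j \<in> I" for j
  proof (rule ccontr)
    assume "\<not> 0 \<le> g j t0"
    have "continuous_on {0..t0} (g j)"
      using \<open>t0 \<in> {0..T}\<close> by (intro continuous_on_subset[OF cont[OF that]]) auto
    then have "\<exists>s. 0 \<le> s \<and> s \<le> t0 \<and> g j s = 0"
      using \<open>\<not> 0 \<le> g j t0\<close> init[OF that] \<open>0 < t0\<close> by (intro IVT2') auto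
    then obtain s where "0 \<le> s" "s \<le> t0" "g j s = 0" by blast
    then show False using before[OF that, of s] \<open>\<not> 0 \<le> g j t0\<close> by (cases "s = t0") auto
  qed
  show ?thesis
  proof (rule that[OF \<open>i0 \<in> I\<close> \<open>0 < t0\<close> _ _ before])
    show "t0 \<le> T" "g i0 t0 = 0" using \<open>t0 \<in> {0..T}\<close> at_t0[OF \<open>i0 \<in> I\<close>] \<open>g i0 t0 \<le> 0\<close> by auto
    show "0 \<le> g j s" if "j \<in> I" "s \<in> {0..t0}" for j s
      using before[of j s] at_t0[of j] that by (cases "s = t0") auto
  qed
qed

lemma barrier_principle:
  fixes g :: "'i \<Rightarrow> real \<Rightarrow> real"
  assumes "finite I"
    and cont: "\<And>j. j \<in> I \<Longrightarrow> continuous_on {0..T} (g j)"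
    and init: "\<And>j. j \<in> I \<Longrightarrow> 0 < g j 0"
    and escape: "\<And>j t. j \<in> I \<Longrightarrow> 0 < t \<Longrightarrow> t \<le> T \<Longrightarrow> (\<forall>k\<in>I. \<forall>s\<in>{0..t}. 0 \<le> g k s) \<Longrightarrow>
        g j t = 0 \<Longrightarrow> \<exists>l>0. (g j has_real_derivative l) (at t)"
    and "i \<in> I" "t \<in> {0..T}"
  shows "0 < g i t"
proof (rule ccontr)
  assume "\<not> 0 < g i t"
  then have "g i t \<le> 0" by simp
  obtain i0 t0 where "i0 \<in> I" "0 < t0" "t0 \<le> T" "g i0 t0 = 0"
    and before: "\<And>j s. j \<in> I \<Longrightarrow> s \<in> {0..<t0} \<Longrightarrow> 0 < g j s"
    and upto: "\<And>j s. j \<in> I \<Longrightarrow> s \<in> {0..t0} \<Longrightarrow> 0 \<le> g j s"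
    using first_zero_time[where g = g, OF \<open>finite I\<close> cont init \<open>i \<in> I\<close> \<open>t \<in> {0..T}\<close> \<open>g i t \<le> 0\<close>]
    by blast
  then obtain l where "0 < l" "(g i0 has_real_derivative l) (at t0)"
    using escape[OF \<open>i0 \<in> I\<close> \<open>0 < t0\<close> \<open>t0 \<le> T\<close>] by blast
  then obtain d where "0 < d" and d: "\<And>h. 0 < h \<Longrightarrow> h < d \<Longrightarrow> g i0 (t0 - h) < g i0 t0"
    using DERIV_pos_inc_left by blast
  define h where "h = min d t0 / 2"
  have "0 < h" "h < d" "h < t0" using \<open>0 < d\<close> \<open>0 < t0\<close> unfolding h_def by auto
  then have "g i0 (t0 - h) < 0" using d \<open>g i0 t0 = 0\<close> by simp
  moreover have "0 < g i0 (t0 - h)"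
    using \<open>0 < h\<close> \<open>h < t0\<close> by (intro before \<open>i0 \<in> I\<close>) simp
  ultimately show False by simp
qed

lemma mult_ge_neg_of_bounds:
  fixes u v e R :: "'a::linordered_idom"
  assumes "- e \<le> u" "- e \<le> v" "\<bar>u\<bar> \<le> R" "\<bar>v\<bar> \<le> R" "0 \<le> e"
  shows "- (e * R) \<le> u * v"
proof -
  have "0 \<le> e * R" using assms by simp
  consider "0 \<le> u * v" | "u < 0" "0 \<le> v" | "0 \<le> u" "v < 0"
    by (metis linorder_not_le mult_nonneg_nonneg mult_nonpos_nonpos order.strict_implies_order)
  then show ?thesis
  proof cases
    case 1
    then show ?thesis using \<open>0 \<le> e * R\<close> by linarith
  next
    case 2
    then have "- e * v \<le> u * v" "e * v \<le> e * R"
      using mult_right_mono[OF \<open>- e \<le> u\<close>] mult_left_mono[of v R e] assms by auto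
    then show ?thesis by simp
  next
    case 3
    then have "u * - e \<le> u * v" "u * e \<le> R * e"
      using mult_left_mono[OF \<open>- e \<le> v\<close>] mult_right_mono[of u R e] assms by auto
    then show ?thesis by (simp add: mult.commute)
  qed
qed

lemma divide_mult_ge_neg_of_bounds:
  fixes a b N Nlo e R :: real
  assumes "- e \<le> a" "- e \<le> b" "\<bar>a\<bar> \<le> R" "\<bar>b\<bar> \<le> R" "0 \<le> e" "0 < Nlo" "Nlo \<le> N"
  shows "- (R * e / Nlo) \<le> a / N * b"
proof -
  have "- (e * R) \<le> a * b" by (rule mult_ge_neg_of_bounds) (use assms in auto)
  then have "- (e * R) / N \<le> a * b / N" using assms by (intro divide_right_mono) auto
  moreover have "- (e * R) / Nlo \<le> - (e * R) / N"
    using assms abs_ge_zero[of a] by (intro divide_left_mono_neg) (auto intro: order_trans)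
  ultimately show ?thesis by (simp add: mult.commute)
qed

lemma divide_mult_le_of_bounds:
  fixes a b N Nlo A B :: real
  assumes "0 \<le> a" "a \<le> A" "0 \<le> b" "b \<le> B" "0 < Nlo" "Nlo \<le> N"
  shows "a / N * b \<le> A * B / Nlo"
proof -
  have "a * b \<le> A * B" using assms by (intro mult_mono) auto
  then show ?thesis using assms by (simp add: frac_le)
qed

lemma convex_comb_between:
  fixes a b e :: real
  assumes "0 \<le> e" "e \<le> 1"
  shows "min a b \<le> b + (a - b) * e" and "b + (a - b) * e \<le> max a b"
proof -
  have le: "a - b \<le> (a - b) * e \<and> (a - b) * e \<le> 0" if "a \<le> b"
    using mult_left_mono_neg[OF assms(2), of "a - b"] that assms by (simp add: mult_nonpos_nonneg)
  have ge: "(a - b) * e \<le> a - b \<and> 0 \<le> (a - b) * e" if "\<not> a \<le> b"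
    using mult_left_mono[OF assms(2), of "a - b"] that assms by simp
  show "min a b \<le> b + (a - b) * e" "b + (a - b) * e \<le> max a b"
  proof (atomize (full), cases "a \<le> b")
    case True
    then have "min a b = a" "max a b = b" by simp_all
    with le[OF True] show "min a b \<le> b + (a - b) * e \<and> b + (a - b) * e \<le> max a b" by linarith
  next
    case False
    then have "min a b = b" "max a b = a" by simp_all
    with ge[OF False] show "min a b \<le> b + (a - b) * e \<and> b + (a - b) * e \<le> max a b" by linarith
  qed
qed

lemma vector_4_nth [simp]:
  "(vector [x1, x2, x3, x4] :: 'a::zero^4) $ 1 = x1"
  "(vector [x1, x2, x3, x4] :: 'a::zero^4) $ 2 = x2"
  "(vector [x1, x2, x3, x4] :: 'a::zero^4) $ 3 = x3"
  "(vector [x1, x2, x3, x4] :: 'a::zero^4) $ 4 = x4"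
  unfolding vector_def by simp_all

lemma vf_nth:
  "vf \<beta>h \<beta>v \<mu>h \<mu>v Cvh Chv u v $ 1 = \<beta>h - Cvh * (u$4 / (u$3 + u$4)) * u$1 - \<mu>h * u$1"
  "vf \<beta>h \<beta>v \<mu>h \<mu>v Cvh Chv u v $ 2 = Cvh * (v$4 / (v$3 + v$4)) * v$1 - \<mu>h * u$2"
  "vf \<beta>h \<beta>v \<mu>h \<mu>v Cvh Chv u v $ 3 = \<beta>v - Chv * u$2 * u$3 - \<mu>v * u$3"
  "vf \<beta>h \<beta>v \<mu>h \<mu>v Cvh Chv u v $ 4 = Chv * u$2 * u$3 - \<mu>v * u$4"
  by (simp_all add: vf_def)

lemma E0_nth [simp]:
  "E0 \<beta>h \<mu>h \<beta>v \<mu>v $ 1 = \<beta>h / \<mu>h" "E0 \<beta>h \<mu>h \<beta>v \<mu>v $ 2 = 0"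
  "E0 \<beta>h \<mu>h \<beta>v \<mu>v $ 3 = \<beta>v / \<mu>v" "E0 \<beta>h \<mu>h \<beta>v \<mu>v $ 4 = 0"
  by (simp_all add: E0_def)

lemma norm_minus_E0_le:
  "norm (u - E0 \<beta>h \<mu>h \<beta>v \<mu>v) \<le> \<bar>u$1 - \<beta>h / \<mu>h\<bar> + \<bar>u$2\<bar> + \<bar>u$3 - \<beta>v / \<mu>v\<bar> + \<bar>u$4\<bar>"
  using norm_le_l1_cart[of "u - E0 \<beta>h \<mu>h \<beta>v \<mu>v"] by (simp add: sum_4)

lemma vf_quasi_positive_perturbed:
  fixes u v :: "real^4"
  assumes params: "0 \<le> \<beta>h" "0 \<le> \<beta>v" "0 \<le> \<mu>h" "0 \<le> \<mu>v" "0 \<le> Cvh" "0 \<le> Chv"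
    and "0 < E" "0 < Nmin" "Nmin \<le> u$3 + u$4"
    and u: "\<And>j. - E \<le> u$j" "\<And>j. \<bar>u$j\<bar> \<le> R"
    and delayed: "- (R * E / Nmin) \<le> v$4 / (v$3 + v$4) * v$1"
    and "u$i = - E"
  shows "0 < vf \<beta>h \<beta>v \<mu>h \<mu>v Cvh Chv u v $ i + (Cvh * R / Nmin + Chv * R + 1) * E"
proof -
  have "0 \<le> R" using u(2)[of 1] by linarith
  then have margin: "0 \<le> Cvh * (R * E / Nmin)" "0 \<le> Chv * (R * E)" "0 \<le> \<mu>h * E" "0 \<le> \<mu>v * E"
    using params \<open>0 < E\<close> \<open>0 < Nmin\<close> by simp_all
  consider "i = 1" | "i = 2" | "i = 3" | "i = 4" using exhaust_4 by blast
  then have "0 < vf \<beta>h \<beta>v \<mu>h \<mu>v Cvh Chv u v $ i + Cvh * (R * E / Nmin) + Chv * (R * E) + E"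
  proof cases
    case 1
    have "- (R * E / Nmin) \<le> u$4 / (u$3 + u$4) * E"
      using \<open>0 < E\<close> u(2)[of i] \<open>u$i = - E\<close> by (intro divide_mult_ge_neg_of_bounds) (use assms in auto)
    from mult_left_mono[OF this params(5)]
    have "- (Cvh * (R * E / Nmin)) \<le> Cvh * (u$4 / (u$3 + u$4)) * E"
      by (simp only: mult_minus_right mult.assoc)
    moreover have "vf \<beta>h \<beta>v \<mu>h \<mu>v Cvh Chv u v $ i = \<beta>h + Cvh * (u$4 / (u$3 + u$4)) * E + \<mu>h * E"
      using 1 \<open>u$i = - E\<close> by (simp add: vf_nth)
    ultimately show ?thesis using params(1) \<open>0 < E\<close> margin by linarith
  next
    case 2
    from mult_left_mono[OF delayed params(5)]
    have "- (Cvh * (R * E / Nmin)) \<le> Cvh * (v$4 / (v$3 + v$4)) * v$1"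
      by (simp only: mult_minus_right mult.assoc)
    moreover have "vf \<beta>h \<beta>v \<mu>h \<mu>v Cvh Chv u v $ i = Cvh * (v$4 / (v$3 + v$4)) * v$1 + \<mu>h * E"
      using 2 \<open>u$i = - E\<close> by (simp add: vf_nth)
    ultimately show ?thesis using params(1) \<open>0 < E\<close> margin by linarith
  next
    case 3
    have "Chv * - R \<le> Chv * u$2"
      using u(2)[of 2] params(6) by (intro mult_left_mono) (auto simp: abs_le_iff)
    from mult_right_mono[OF this less_imp_le[OF \<open>0 < E\<close>]]
    have "- (Chv * (R * E)) \<le> Chv * u$2 * E" by (simp add: mult.assoc)
    moreover have "vf \<beta>h \<beta>v \<mu>h \<mu>v Cvh Chv u v $ i = \<beta>v + Chv * u$2 * E + \<mu>v * E"
      using 3 \<open>u$i = - E\<close> by (simp add: vf_nth)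
    ultimately show ?thesis using params(2) \<open>0 < E\<close> margin by linarith
  next
    case 4
    have "- (E * R) \<le> u$2 * u$3"
      using \<open>0 < E\<close> by (intro mult_ge_neg_of_bounds u) simp
    from mult_left_mono[OF this params(6)]
    have "- (Chv * (R * E)) \<le> Chv * u$2 * u$3"
      by (simp only: mult_minus_right mult.assoc mult.commute[of E R])
    moreover have "vf \<beta>h \<beta>v \<mu>h \<mu>v Cvh Chv u v $ i = Chv * u$2 * u$3 + \<mu>v * E"
      using 4 \<open>u$i = - E\<close> by (simp add: vf_nth)
    ultimately show ?thesis using params(2) \<open>0 < E\<close> margin by linarith
  qed
  moreover have "(Cvh * R / Nmin + Chv * R + 1) * E = Cvh * (R * E / Nmin) + Chv * (R * E) + E"
    by (simp add: algebra_simps)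
  ultimately show ?thesis by (simp add: add.assoc)
qed

section \<open>Solutions of the delay system\<close>

locale vector_host_solution =
  fixes \<beta>h \<beta>v \<mu>h \<mu>v Cvh Chv \<tau> :: real and \<phi> x :: "real \<Rightarrow> real^4"
  assumes bh: "0 < \<beta>h" and bv: "0 < \<beta>v" and mh: "0 < \<mu>h" and mv: "0 < \<mu>v"
    and cvh: "0 < Cvh" and chv: "0 < Chv" and tau: "0 \<le> \<tau>"
    and phi: "\<phi> \<in> Cplus \<tau>" and sol: "is_solution \<beta>h \<beta>v \<mu>h \<mu>v Cvh Chv \<tau> \<phi> x"
begin

abbreviation "Astar \<equiv> \<beta>h / \<mu>h"
abbreviation "Nstar \<equiv> \<beta>v / \<mu>v"
abbreviation "Nv t \<equiv> x t $ 3 + x t $ 4"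
abbreviation "rhs t \<equiv> vf \<beta>h \<beta>v \<mu>h \<mu>v Cvh Chv (x t) (x (t - \<tau>))"

lemma Nstar_pos: "0 < Nstar"
  using bv mv by simp

lemma x_continuous: "continuous_on {-\<tau>..} x"
  using sol unfolding is_solution_def by blast

lemma x_nth_continuous: "continuous_on {-\<tau>..} (\<lambda>t. x t $ i)"
  using x_continuous by (rule continuous_on_component)

lemma x_nth_continuous_from: "0 \<le> T \<Longrightarrow> continuous_on {T..} (\<lambda>t. x t $ i)"
  using tau by (intro continuous_on_subset[OF x_nth_continuous]) auto

lemma x_init: "\<theta> \<in> {-\<tau>..0} \<Longrightarrow> x \<theta> = \<phi> \<theta>"
  using sol unfolding is_solution_def by blast

lemma x_init_nonneg: "\<theta> \<in> {-\<tau>..0} \<Longrightarrow> 0 \<le> x \<theta> $ i"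
  using phi x_init unfolding Cplus_def by auto

lemma Nv_init_pos: "\<theta> \<in> {-\<tau>..0} \<Longrightarrow> 0 < Nv \<theta>"
  using phi x_init unfolding Cplus_def by auto

lemma x_nth_deriv:
  assumes "0 < t"
  shows "((\<lambda>t. x t $ i) has_real_derivative rhs t $ i) (at t)"
proof -
  have "(x has_vector_derivative rhs t) (at t within {0..})"
    using sol assms unfolding is_solution_def by simp
  then have "(x has_vector_derivative rhs t) (at t within {0<..})"
    by (rule has_vector_derivative_within_subset) auto
  then have "(x has_vector_derivative rhs t) (at t)"
    using assms at_within_open[of t "{0<..}"] by simp
  from bounded_linear.has_vector_derivative[OF bounded_linear_vec_nth this, of i]
  show ?thesis by (simp add: has_real_derivative_iff_has_vector_derivative)
qed

lemma eventually_x_nth_deriv: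
  "eventually (\<lambda>t. ((\<lambda>t. x t $ i) has_real_derivative rhs t $ i) (at t)) at_top"
  using eventually_gt_at_top[of 0] by eventually_elim (rule x_nth_deriv)

lemma Nv_deriv: "0 < t \<Longrightarrow> (Nv has_real_derivative \<beta>v - \<mu>v * Nv t) (at t)"
  using DERIV_add[OF x_nth_deriv[of t 3] x_nth_deriv[of t 4]] by (simp add: vf_nth algebra_simps)

lemma Nv_formula: "0 \<le> t \<Longrightarrow> Nv t = Nstar + (Nv 0 - Nstar) * exp (- (\<mu>v * t))"
  using linear_ode_solution[of 0 Nv \<mu>v \<beta>v t] mv Nv_deriv
  by (simp add: continuous_on_add x_nth_continuous_from)

lemma Nv_ge_min: "0 \<le> t \<Longrightarrow> min (Nv 0) Nstar \<le> Nv t"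
  using convex_comb_between(1)[where a = "Nv 0" and b = Nstar and e = "exp (- (\<mu>v * t))"] Nv_formula[of t] mv by simp

lemma Nv_dist_le:
  assumes "0 \<le> t" shows "\<bar>Nv t - Nstar\<bar> \<le> \<bar>Nv 0 - Nstar\<bar>"
proof -
  have "exp (- (\<mu>v * t)) \<le> 1" using mv assms by auto
  then show ?thesis using Nv_formula[OF assms] by (simp add: abs_mult mult_left_le)
qed

lemma Nv_pos: "- \<tau> \<le> t \<Longrightarrow> 0 < Nv t"
  using Nv_init_pos[of t] Nv_init_pos[of 0] Nv_ge_min[of t] Nstar_pos tau by (cases "t \<le> 0") auto

lemma Nv_tendsto: "(Nv \<longlongrightarrow> Nstar) at_top"
proof -
  have "((\<lambda>t. Nstar + (Nv 0 - Nstar) * exp (- (\<mu>v * (t - 0)))) \<longlongrightarrow> Nstar + 0) at_top"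
    by (rule tendsto_add[OF tendsto_const tendsto_exp_decay[OF mv]])
  moreover have "eventually (\<lambda>t. Nstar + (Nv 0 - Nstar) * exp (- (\<mu>v * (t - 0))) = Nv t) at_top"
    using eventually_ge_at_top[of 0]
  proof eventually_elim
    case (elim t)
    then show ?case using Nv_formula[OF elim] by simp
  qed
  ultimately show ?thesis by (simp add: tendsto_cong)
qed

lemma rhs_escape_rate:
  assumes "0 < t0" "0 < E"
    and low: "\<And>s k. s \<in> {-\<tau>..t0} \<Longrightarrow> - E \<le> x s $ k"
    and bounded: "\<And>s k. s \<in> {-\<tau>..t0} \<Longrightarrow> \<bar>x s $ k\<bar> \<le> R"
    and "x t0 $ j = - E"
  shows "0 < rhs t0 $ j + (Cvh * R / min (Nv 0) Nstar + Chv * R + 1) * E"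
proof -
  define Nmin where "Nmin = min (Nv 0) Nstar"
  have "0 < Nmin" unfolding Nmin_def using Nv_pos[of 0] tau Nstar_pos by simp
  have "t0 \<in> {-\<tau>..t0}" using \<open>0 < t0\<close> tau by simp
  then have "0 \<le> R" using bounded[of t0 1] by linarith
  have delayed: "- (R * E / Nmin) \<le> x (t0 - \<tau>) $ 4 / Nv (t0 - \<tau>) * x (t0 - \<tau>) $ 1"
  proof (cases "t0 - \<tau> \<le> 0")
    case True
    then have "0 \<le> x (t0 - \<tau>) $ 4 / Nv (t0 - \<tau>) * x (t0 - \<tau>) $ 1"
      using x_init_nonneg[of "t0 - \<tau>"] \<open>0 < t0\<close> by simp
    moreover have "0 \<le> R * E / Nmin" using \<open>0 \<le> R\<close> \<open>0 < E\<close> \<open>0 < Nmin\<close> by simp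
    ultimately show ?thesis by linarith
  next
    case False
    then show ?thesis
      using low bounded Nv_ge_min[of "t0 - \<tau>"] \<open>0 < E\<close> \<open>0 < Nmin\<close> tau
      unfolding Nmin_def by (intro divide_mult_ge_neg_of_bounds) auto
  qed
  show ?thesis
    unfolding Nmin_def[symmetric]
  proof (rule vf_quasi_positive_perturbed[OF _ _ _ _ _ _ \<open>0 < E\<close> \<open>0 < Nmin\<close> _ _ _ delayed])
    show "Nmin \<le> Nv t0" unfolding Nmin_def using Nv_ge_min \<open>0 < t0\<close> by simp
  qed (use low bounded \<open>t0 \<in> {-\<tau>..t0}\<close> \<open>x t0 $ j = - E\<close> bh bv mh mv cvh chv in auto)
qed

lemma x_nth_bounded_on:
  obtains R where "\<And>s j. s \<in> {-\<tau>..T} \<Longrightarrow> \<bar>x s $ j\<bar> \<le> R"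
proof -
  have "compact (x ` {-\<tau>..T})"
    by (rule compact_continuous_image[OF continuous_on_subset[OF x_continuous]]) auto
  then have "bounded (x ` {-\<tau>..T})" by (rule compact_imp_bounded)
  then obtain R where "\<forall>y\<in>x ` {-\<tau>..T}. norm y \<le> R" unfolding bounded_iff by blast
  then show ?thesis
    using component_le_norm_cart order_trans that by (metis image_eqI)
qed

lemma x_perturbed_positive:
  assumes "0 < T"
  obtains K where "\<And>\<eta> t i. 0 < \<eta> \<Longrightarrow> t \<in> {0..T} \<Longrightarrow> 0 < x t $ i + \<eta> * exp (K * t)"
proof -
  obtain R where R: "\<And>s j. s \<in> {-\<tau>..T} \<Longrightarrow> \<bar>x s $ j\<bar> \<le> R"
    using x_nth_bounded_on[where T = T] by blast
  define K where "K = Cvh * R / min (Nv 0) Nstar + Chv * R + 1"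
  have "0 \<le> K"
    unfolding K_def using R[of 0 1] tau \<open>0 < T\<close> Nv_pos[of 0] Nstar_pos cvh chv by simp
  have "0 < x t $ i + \<eta> * exp (K * t)" if "0 < \<eta>" "t \<in> {0..T}" for \<eta> t i
  proof (rule barrier_principle[where I = UNIV and g = "\<lambda>j t. x t $ j + \<eta> * exp (K * t)"])
    show "continuous_on {0..T} (\<lambda>t. x t $ j + \<eta> * exp (K * t))" for j
      by (intro continuous_intros continuous_on_subset[OF x_nth_continuous_from[of 0]]) auto
    show "0 < x 0 $ j + \<eta> * exp (K * 0)" for j
      using x_init_nonneg[of 0 j] tau \<open>0 < \<eta>\<close> by simp
  next
    fix j t0
    assume "0 < t0" "t0 \<le> T" and before: "\<forall>k\<in>UNIV. \<forall>s\<in>{0..t0}. 0 \<le> x s $ k + \<eta> * exp (K * s)"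
      and zero: "x t0 $ j + \<eta> * exp (K * t0) = 0"
    define E where "E = \<eta> * exp (K * t0)"
    have low: "- E \<le> x s $ k" if "s \<in> {-\<tau>..t0}" for s k
    proof (cases "s \<le> 0")
      case True
      moreover have "0 < E" unfolding E_def using \<open>0 < \<eta>\<close> by simp
      ultimately show ?thesis using x_init_nonneg[of s k] that by simp
    next
      case False
      then have "0 \<le> x s $ k + \<eta> * exp (K * s)" using before that by simp
      moreover have "K * s \<le> K * t0" using mult_left_mono[of s t0 K] that \<open>0 \<le> K\<close> by simp
      then have "\<eta> * exp (K * s) \<le> E" unfolding E_def using \<open>0 < \<eta>\<close> by simp
      ultimately show ?thesis by linarith
    qed
    have "0 < rhs t0 $ j + K * E"
      unfolding K_def
    proof (rule rhs_escape_rate[OF \<open>0 < t0\<close> _ low])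
      show "0 < E" unfolding E_def using \<open>0 < \<eta>\<close> by simp
      show "\<bar>x s $ k\<bar> \<le> R" if "s \<in> {-\<tau>..t0}" for s k using R[of s k] that \<open>t0 \<le> T\<close> by simp
      show "x t0 $ j = - E" using zero unfolding E_def by simp
    qed
    moreover have "((\<lambda>t. x t $ j + \<eta> * exp (K * t)) has_real_derivative rhs t0 $ j + K * E) (at t0)"
      unfolding E_def using x_nth_deriv[OF \<open>0 < t0\<close>]
      by (auto intro!: derivative_eq_intros simp: algebra_simps)
    ultimately show "\<exists>l>0. ((\<lambda>t. x t $ j + \<eta> * exp (K * t)) has_real_derivative l) (at t0)"
      by blast
  qed (use that in auto)
  then show ?thesis by (rule that)
qed

lemma x_nonneg:
  assumes "- \<tau> \<le> t" shows "0 \<le> x t $ i"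
proof (cases "t \<le> 0")
  case True
  then show ?thesis using x_init_nonneg assms by simp
next
  case False
  then have "0 < t" by simp
  then obtain K where K: "\<And>\<eta> s j. 0 < \<eta> \<Longrightarrow> s \<in> {0..t} \<Longrightarrow> 0 < x s $ j + \<eta> * exp (K * s)"
    using x_perturbed_positive by blast
  show ?thesis
  proof (rule ccontr)
    assume "\<not> 0 \<le> x t $ i"
    then have "0 < - x t $ i / (2 * exp (K * t))" by (simp add: divide_neg_pos)
    from K[OF this, of t i] show False using \<open>\<not> 0 \<le> x t $ i\<close> \<open>0 < t\<close> by simp
  qed
qed

lemma eventually_x_nth_nonneg: "eventually (\<lambda>t. 0 \<le> x t $ i) at_top"
  using eventually_ge_at_top[of 0]
proof eventually_elim
  case (elim t)
  then show ?case using tau by (intro x_nonneg) simp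
qed

lemma liminf_x_nth_nonneg: "liminf_ge (\<lambda>t. x t $ i) 0"
  by (rule liminf_ge_if_eventually_ge[OF eventually_x_nth_nonneg])

lemma S_h_deriv_le: "0 < t \<Longrightarrow> rhs t $ 1 \<le> \<beta>h - \<mu>h * x t $ 1"
  using x_nonneg[of t] tau cvh by (simp add: vf_nth)

lemma limsup_S_h: "limsup_le (\<lambda>t. x t $ 1) Astar"
proof -
  have "eventually (\<lambda>t. ((\<lambda>t. x t $ 1) has_real_derivative rhs t $ 1) (at t)
      \<and> rhs t $ 1 \<le> \<beta>h - \<mu>h * x t $ 1) at_top"
    using eventually_x_nth_deriv[of 1] eventually_gt_at_top[of 0]
    by eventually_elim (simp add: S_h_deriv_le)
  from limsup_le_linear_ode[OF mh this] show ?thesis .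
qed

lemma limsup_I_h:
  assumes "0 \<le> L" and I_v: "limsup_le (\<lambda>t. x t $ 4) L"
  shows "limsup_le (\<lambda>t. x t $ 2) (Cvh * (L * Astar / Nstar) / \<mu>h)"
proof -
  define G where "G \<epsilon> = Cvh * ((L + \<epsilon>) * (Astar + \<epsilon>) / (Nstar - \<epsilon>)) / \<mu>h" for \<epsilon>
  have bound: "limsup_le (\<lambda>t. x t $ 2) (G \<epsilon>)" if "0 < \<epsilon>" "\<epsilon> < Nstar" for \<epsilon>
  proof -
    have "eventually (\<lambda>s. x s $ 4 \<le> L + \<epsilon> \<and> x s $ 1 \<le> Astar + \<epsilon> \<and> Nstar - \<epsilon> < Nv s \<and> 0 \<le> s) at_top"
      using I_v limsup_S_h order_tendstoD(1)[OF Nv_tendsto, of "Nstar - \<epsilon>"] \<open>0 < \<epsilon>\<close>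
      unfolding limsup_le_def by (intro eventually_conj eventually_ge_at_top) auto
    from eventually_at_top_shift[OF this, of \<tau>]
    have "eventually (\<lambda>t. ((\<lambda>t. x t $ 2) has_real_derivative rhs t $ 2) (at t)
        \<and> rhs t $ 2 \<le> Cvh * ((L + \<epsilon>) * (Astar + \<epsilon>) / (Nstar - \<epsilon>)) - \<mu>h * x t $ 2) at_top"
      using eventually_x_nth_deriv[of 2]
    proof eventually_elim
      case (elim t)
      then have "x (t - \<tau>) $ 4 / Nv (t - \<tau>) * x (t - \<tau>) $ 1 \<le> (L + \<epsilon>) * (Astar + \<epsilon>) / (Nstar - \<epsilon>)"
        using x_nonneg[of "t - \<tau>"] tau that by (intro divide_mult_le_of_bounds) auto
      from mult_left_mono[OF this less_imp_le[OF cvh]] show ?case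
        using elim by (simp add: vf_nth mult.assoc)
    qed
    from limsup_le_linear_ode[OF mh this] show ?thesis by (simp add: G_def)
  qed
  have "eventually (\<lambda>\<epsilon>. limsup_le (\<lambda>t. x t $ 2) (G \<epsilon>)) (at_right 0)"
    using eventually_at_right_real[OF Nstar_pos] by eventually_elim (auto intro: bound)
  moreover have "(G \<longlongrightarrow> Cvh * ((L + 0) * (Astar + 0) / (Nstar - 0)) / \<mu>h) (at_right 0)"
    unfolding G_def using Nstar_pos mh by (intro tendsto_intros) auto
  ultimately show ?thesis by (intro limsup_le_limit[OF trivial_limit_at_right_real]) auto
qed

lemma limsup_I_v:
  assumes "0 \<le> b" and I_h: "limsup_le (\<lambda>t. x t $ 2) b"
  shows "limsup_le (\<lambda>t. x t $ 4) (Chv * b * Nstar / (Chv * b + \<mu>v))"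
proof -
  define G where "G \<epsilon> = Chv * (b + \<epsilon>) * (Nstar + \<epsilon>) / (Chv * (b + \<epsilon>) + \<mu>v)" for \<epsilon>
  have bound: "limsup_le (\<lambda>t. x t $ 4) (G \<epsilon>)" if "0 < \<epsilon>" for \<epsilon>
  proof -
    have q: "0 < Chv * (b + \<epsilon>) + \<mu>v" using chv mv \<open>0 \<le> b\<close> \<open>0 < \<epsilon>\<close> by (simp add: add_nonneg_pos)
    have "eventually (\<lambda>t. x t $ 2 \<le> b + \<epsilon> \<and> Nv t < Nstar + \<epsilon> \<and> 0 \<le> t) at_top"
      using I_h order_tendstoD(2)[OF Nv_tendsto, of "Nstar + \<epsilon>"] \<open>0 < \<epsilon>\<close>
      unfolding limsup_le_def by (intro eventually_conj eventually_ge_at_top) auto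
    then have "eventually (\<lambda>t. ((\<lambda>t. x t $ 4) has_real_derivative rhs t $ 4) (at t)
        \<and> rhs t $ 4 \<le> Chv * (b + \<epsilon>) * (Nstar + \<epsilon>) - (Chv * (b + \<epsilon>) + \<mu>v) * x t $ 4) at_top"
      using eventually_x_nth_deriv[of 4]
    proof eventually_elim
      case (elim t)
      have "x t $ 2 * x t $ 3 \<le> (b + \<epsilon>) * x t $ 3"
        using elim x_nonneg[of t] tau by (intro mult_right_mono) auto
      also have "\<dots> \<le> (b + \<epsilon>) * (Nstar + \<epsilon> - x t $ 4)"
        using elim \<open>0 \<le> b\<close> \<open>0 < \<epsilon>\<close> by (intro mult_left_mono) auto
      finally have "Chv * (x t $ 2 * x t $ 3) \<le> Chv * ((b + \<epsilon>) * (Nstar + \<epsilon> - x t $ 4))"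
        using chv by (intro mult_left_mono) auto
      moreover have "rhs t $ 4 = Chv * (x t $ 2 * x t $ 3) - \<mu>v * x t $ 4"
        by (simp add: vf_nth mult.assoc)
      moreover have "Chv * ((b + \<epsilon>) * (Nstar + \<epsilon> - x t $ 4)) - \<mu>v * x t $ 4
          = Chv * (b + \<epsilon>) * (Nstar + \<epsilon>) - (Chv * (b + \<epsilon>) + \<mu>v) * x t $ 4"
        by (simp add: algebra_simps add_divide_distrib)
      ultimately show ?case using elim by linarith
    qed
    from limsup_le_linear_ode[OF q this] show ?thesis by (simp add: G_def)
  qed
  have "(G \<longlongrightarrow> Chv * (b + 0) * (Nstar + 0) / (Chv * (b + 0) + \<mu>v)) (at_right 0)"
  proof -
    have "0 < Chv * (b + 0) + \<mu>v" using chv mv \<open>0 \<le> b\<close> by (simp add: add_nonneg_pos)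
    then show ?thesis unfolding G_def by (intro tendsto_intros) auto
  qed
  then show ?thesis
    using eventually_at_right_less[of 0] bound
    by (intro limsup_le_limit[OF trivial_limit_at_right_real]) (auto elim: eventually_mono)
qed

lemma limsup_I_v_zero:
  assumes threshold: "Cvh * Chv * \<beta>h \<le> \<mu>h\<^sup>2 * \<mu>v"
  shows "limsup_le (\<lambda>t. x t $ 4) 0"
proof -
  define h where "h L = Chv * (Cvh * (L * Astar / Nstar) / \<mu>h)" for L
  show ?thesis
  proof (rule limsup_le_zero_of_contraction[where F = "\<lambda>L. h L * Nstar / (h L + \<mu>v)"])
    have "eventually (\<lambda>t. Nv t < Nstar + 1 \<and> 0 \<le> x t $ 3) at_top"
      using order_tendstoD(2)[OF Nv_tendsto, of "Nstar + 1"] eventually_x_nth_nonneg[of 3]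
      by (intro eventually_conj) auto
    then have "eventually (\<lambda>t. x t $ 4 \<le> Nstar + 1) at_top"
      by (rule eventually_mono) auto
    then show "limsup_le (\<lambda>t. x t $ 4) (Nstar + 1)" by (rule limsup_le_if_eventually_le)
    show "liminf_ge (\<lambda>t. x t $ 4) 0" by (rule liminf_x_nth_nonneg)
  next
    fix L :: real assume "0 \<le> L" "limsup_le (\<lambda>t. x t $ 4) L"
    have "0 \<le> Cvh * (L * Astar / Nstar) / \<mu>h"
      using \<open>0 \<le> L\<close> cvh bh bv mh mv by (intro mult_nonneg_nonneg divide_nonneg_pos) auto
    from limsup_I_v[OF this limsup_I_h[OF \<open>0 \<le> L\<close> \<open>limsup_le _ L\<close>]]
    show "limsup_le (\<lambda>t. x t $ 4) (h L * Nstar / (h L + \<mu>v))"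
      unfolding h_def .
  next
    fix L :: real assume "0 < L"
    then have "0 < h L" unfolding h_def using chv cvh bh bv mh mv
      by (intro mult_pos_pos divide_pos_pos) auto
    have "h L * Nstar = L * (Cvh * Chv * \<beta>h / \<mu>h\<^sup>2)"
      unfolding h_def using bv mv mh by (simp add: field_simps power2_eq_square)
    also have "\<dots> \<le> L * \<mu>v"
      using threshold \<open>0 < L\<close> mh by (intro mult_left_mono) (auto simp: divide_le_eq mult.commute)
    also have "\<dots> < L * (h L + \<mu>v)" using \<open>0 < L\<close> \<open>0 < h L\<close> by simp
    finally have "h L * Nstar < L * (h L + \<mu>v)" .
    then show "h L * Nstar / (h L + \<mu>v) < L"
      using \<open>0 < h L\<close> mv by (subst divide_less_eq) (auto simp: mult.commute)
  qed
qed

lemma liminf_S_h: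
  assumes I_v: "((\<lambda>t. x t $ 4) \<longlongrightarrow> 0) at_top"
  shows "liminf_ge (\<lambda>t. x t $ 1) Astar"
proof -
  define G where "G \<epsilon> = (\<beta>h - Cvh * (\<epsilon> * (Astar + 1) / (Nstar / 2))) / \<mu>h" for \<epsilon>
  have bound: "liminf_ge (\<lambda>t. x t $ 1) (G \<epsilon>)" if "0 < \<epsilon>" for \<epsilon>
  proof -
    have "eventually (\<lambda>t. x t $ 4 \<le> \<epsilon> \<and> x t $ 1 \<le> Astar + 1 \<and> Nstar / 2 < Nv t \<and> 0 \<le> t) at_top"
      using I_v limsup_S_h order_tendstoD(1)[OF Nv_tendsto, of "Nstar / 2"] \<open>0 < \<epsilon>\<close> Nstar_pos
      unfolding tendsto_iff_limsup_le_liminf_ge limsup_le_def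
      by (intro eventually_conj eventually_ge_at_top) auto
    then have "eventually (\<lambda>t. ((\<lambda>t. x t $ 1) has_real_derivative rhs t $ 1) (at t)
        \<and> \<beta>h - Cvh * (\<epsilon> * (Astar + 1) / (Nstar / 2)) - \<mu>h * x t $ 1 \<le> rhs t $ 1) at_top"
      using eventually_x_nth_deriv[of 1]
    proof eventually_elim
      case (elim t)
      then have "x t $ 4 / Nv t * x t $ 1 \<le> \<epsilon> * (Astar + 1) / (Nstar / 2)"
        using x_nonneg[of t] tau Nstar_pos by (intro divide_mult_le_of_bounds) auto
      from mult_left_mono[OF this less_imp_le[OF cvh]] show ?case
        using elim by (simp add: vf_nth mult.assoc)
    qed
    from liminf_ge_linear_ode[OF mh this] show ?thesis by (simp add: G_def)
  qed
  have "(G \<longlongrightarrow> (\<beta>h - Cvh * (0 * (Astar + 1) / (Nstar / 2))) / \<mu>h) (at_right 0)"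
    unfolding G_def using Nstar_pos mh by (intro tendsto_intros) auto
  then show ?thesis
    using eventually_at_right_less[of 0] bound
    by (intro liminf_ge_limit[OF trivial_limit_at_right_real]) (auto elim: eventually_mono)
qed

lemma x_tendsto_E0:
  assumes threshold: "Cvh * Chv * \<beta>h \<le> \<mu>h\<^sup>2 * \<mu>v"
  shows "(x \<longlongrightarrow> E0 \<beta>h \<mu>h \<beta>v \<mu>v) at_top"
proof -
  have I_v: "((\<lambda>t. x t $ 4) \<longlongrightarrow> 0) at_top"
    using limsup_I_v_zero[OF threshold] liminf_x_nth_nonneg
    by (simp add: tendsto_iff_limsup_le_liminf_ge)
  have I_h: "((\<lambda>t. x t $ 2) \<longlongrightarrow> 0) at_top"
    using limsup_I_h[OF order_refl limsup_I_v_zero[OF threshold]] liminf_x_nth_nonneg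
    by (simp add: tendsto_iff_limsup_le_liminf_ge)
  have S_v: "((\<lambda>t. x t $ 3) \<longlongrightarrow> Nstar) at_top"
    using tendsto_diff[OF Nv_tendsto I_v] by simp
  have S_h: "((\<lambda>t. x t $ 1) \<longlongrightarrow> Astar) at_top"
    using limsup_S_h liminf_S_h[OF I_v] by (simp add: tendsto_iff_limsup_le_liminf_ge)
  show ?thesis
  proof (rule vec_tendstoI)
    fix i :: 4
    consider "i = 1" | "i = 2" | "i = 3" | "i = 4" using exhaust_4 by blast
    then show "((\<lambda>t. x t $ i) \<longlongrightarrow> E0 \<beta>h \<mu>h \<beta>v \<mu>v $ i) at_top"
      by cases (simp_all add: S_h I_h S_v I_v)
  qed
qed

lemma S_h_le_max: "0 \<le> t \<Longrightarrow> x t $ 1 \<le> max (x 0 $ 1) Astar"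
  using linear_ode_upper_bound[OF x_nth_continuous_from[of 0] mh x_nth_deriv S_h_deriv_le, of t]
    convex_comb_between(2)[where a = "x 0 $ 1" and b = Astar and e = "exp (- (\<mu>h * t))"] mh
  by simp

lemma S_h_ge_min:
  assumes "0 < Nlo" and bounds: "\<And>s. 0 \<le> s \<Longrightarrow> x s $ 4 \<le> m \<and> Nlo \<le> Nv s" and "0 \<le> t"
  shows "min (x 0 $ 1) (\<beta>h / (\<mu>h + Cvh * m / Nlo)) \<le> x t $ 1"
proof -
  define q where "q = \<mu>h + Cvh * m / Nlo"
  have "0 \<le> m" using bounds[of 0] x_nonneg[of 0 4] tau by simp
  then have "0 < q" unfolding q_def using mh cvh \<open>0 < Nlo\<close> by (simp add: add_pos_nonneg)
  have ineq: "- rhs s $ 1 \<le> - \<beta>h - q * - x s $ 1" if "0 < s" for s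
  proof -
    have "x s $ 4 / Nv s \<le> m / Nlo"
      using bounds[of s] x_nonneg[of s] tau that \<open>0 < Nlo\<close> \<open>0 \<le> m\<close> by (intro frac_le) auto
    from mult_right_mono[OF mult_left_mono[OF this] x_nonneg[of s 1]]
    have "Cvh * (x s $ 4 / Nv s) * x s $ 1 \<le> Cvh * (m / Nlo) * x s $ 1"
      using cvh tau that by simp
    then show ?thesis unfolding q_def by (simp add: vf_nth algebra_simps)
  qed
  have deriv: "((\<lambda>t. - x t $ 1) has_real_derivative - rhs s $ 1) (at s)" if "0 < s" for s
    using DERIV_minus[OF x_nth_deriv[OF that]] .
  have "- x t $ 1 \<le> - \<beta>h / q + (- x 0 $ 1 - - \<beta>h / q) * exp (- (q * (t - 0)))"
    by (rule linear_ode_upper_bound[OF continuous_on_minus[OF x_nth_continuous_from[OF order_refl]]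
        \<open>0 < q\<close> deriv ineq \<open>0 \<le> t\<close>])
  moreover have "min (x 0 $ 1) (\<beta>h / q) \<le> \<beta>h / q + (x 0 $ 1 - \<beta>h / q) * exp (- (q * t))"
    using \<open>0 < q\<close> \<open>0 \<le> t\<close> by (intro convex_comb_between) auto
  ultimately show ?thesis unfolding q_def[symmetric] by (simp add: algebra_simps)
qed

lemma S_h_dist_lt:
  assumes "0 < Nlo" and bounds: "\<And>s. 0 \<le> s \<Longrightarrow> x s $ 4 \<le> m \<and> Nlo \<le> Nv s"
    and init: "\<bar>x 0 $ 1 - Astar\<bar> < \<delta>" and "0 \<le> t"
  shows "\<bar>x t $ 1 - Astar\<bar> < \<delta> + \<beta>h * Cvh * m / (\<mu>h\<^sup>2 * Nlo)"
proof -
  define q where "q = \<mu>h + Cvh * m / Nlo"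
  have "0 \<le> m" using bounds[of 0] x_nonneg[of 0 4] tau by simp
  then have "0 \<le> Cvh * m / Nlo" using cvh \<open>0 < Nlo\<close> by simp
  then have "\<mu>h \<le> q" "0 < q" unfolding q_def using mh by simp_all
  have "Astar - \<beta>h / q = \<beta>h * (q - \<mu>h) / (\<mu>h * q)"
    using mh \<open>0 < q\<close> by (simp add: field_simps)
  also have "\<dots> \<le> \<beta>h * (q - \<mu>h) / (\<mu>h * \<mu>h)"
    using mh bh \<open>\<mu>h \<le> q\<close> by (intro divide_left_mono mult_left_mono) auto
  also have "\<dots> = \<beta>h * Cvh * m / (\<mu>h\<^sup>2 * Nlo)"
    unfolding q_def by (simp add: power2_eq_square mult_ac)
  finally have "Astar - \<beta>h / q \<le> \<beta>h * Cvh * m / (\<mu>h\<^sup>2 * Nlo)" .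
  moreover have "0 \<le> \<beta>h * Cvh * m / (\<mu>h\<^sup>2 * Nlo)"
    using bh cvh \<open>0 \<le> m\<close> \<open>0 < Nlo\<close> by simp
  moreover have "x 0 $ 1 \<le> x t $ 1 \<or> \<beta>h / q \<le> x t $ 1"
    using S_h_ge_min[OF \<open>0 < Nlo\<close> bounds \<open>0 \<le> t\<close>] unfolding q_def by linarith
  moreover have "x t $ 1 \<le> x 0 $ 1 \<or> x t $ 1 \<le> Astar"
    using S_h_le_max[OF \<open>0 \<le> t\<close>] by linarith
  ultimately show ?thesis using init unfolding abs_less_iff by (elim disjE) linarith+
qed

lemma I_h_deriv_neg_at_bound:
  assumes "0 < t0" "0 < m" "0 < Nlo"
    and bounds: "x (t0 - \<tau>) $ 1 \<le> A1" "Nlo \<le> Nv (t0 - \<tau>)" "x (t0 - \<tau>) $ 4 \<le> m"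
    and k1: "Cvh * A1 < \<kappa> * \<mu>h * Nlo"
    and "x t0 $ 2 = \<kappa> * m"
  shows "rhs t0 $ 2 < 0"
proof -
  let ?v = "x (t0 - \<tau>)"
  have "?v $ 4 / Nv (t0 - \<tau>) * ?v $ 1 \<le> m * A1 / Nlo"
    using bounds x_nonneg[of "t0 - \<tau>"] \<open>0 < t0\<close> \<open>0 < Nlo\<close> by (intro divide_mult_le_of_bounds) auto
  then have "Cvh * (?v $ 4 / Nv (t0 - \<tau>)) * ?v $ 1 \<le> Cvh * A1 * m / Nlo"
    using mult_left_mono[of _ _ Cvh] cvh by (fastforce simp: mult.assoc mult.commute[of m])
  also have "\<dots> < \<kappa> * \<mu>h * Nlo * m / Nlo"
    using k1 \<open>0 < m\<close> \<open>0 < Nlo\<close> by (intro divide_strict_right_mono mult_strict_right_mono) auto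
  also have "\<dots> = \<mu>h * x t0 $ 2"
    using \<open>x t0 $ 2 = \<kappa> * m\<close> \<open>0 < Nlo\<close> by simp
  finally show ?thesis by (simp add: vf_nth)
qed

lemma I_v_deriv_neg_at_bound:
  assumes "0 < t0" "0 < m" "Nv t0 \<le> Nhi"
    and k2: "\<kappa> * Chv * Nhi < \<mu>v"
    and "x t0 $ 2 \<le> \<kappa> * m" "x t0 $ 4 = m"
  shows "rhs t0 $ 4 < 0"
proof -
  have "- \<tau> \<le> t0" using \<open>0 < t0\<close> tau by simp
  then have "0 \<le> x t0 $ 2" "0 \<le> x t0 $ 3" "x t0 $ 3 \<le> Nhi"
    using x_nonneg[of t0] \<open>Nv t0 \<le> Nhi\<close> \<open>x t0 $ 4 = m\<close> \<open>0 < m\<close> by auto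
  then have "x t0 $ 2 * x t0 $ 3 \<le> (\<kappa> * m) * Nhi"
    using \<open>x t0 $ 2 \<le> \<kappa> * m\<close> by (intro mult_mono) auto
  then have "Chv * (x t0 $ 2 * x t0 $ 3) \<le> \<kappa> * Chv * Nhi * m"
    using mult_left_mono[of _ _ Chv] chv by (fastforce simp: mult_ac)
  also have "\<dots> < \<mu>v * m" using k2 \<open>0 < m\<close> by simp
  also have "\<dots> = \<mu>v * x t0 $ 4" using \<open>x t0 $ 4 = m\<close> by simp
  finally show ?thesis by (simp add: vf_nth mult.assoc)
qed

lemma infected_box_invariant:
  assumes "0 < m" "0 < Nlo"
    and bounds: "\<And>s. - \<tau> \<le> s \<Longrightarrow> x s $ 1 \<le> A1 \<and> Nlo \<le> Nv s \<and> Nv s \<le> Nhi"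
    and k1: "Cvh * A1 < \<kappa> * \<mu>h * Nlo" and k2: "\<kappa> * Chv * Nhi < \<mu>v"
    and init: "\<And>\<theta>. \<theta> \<in> {-\<tau>..0} \<Longrightarrow> x \<theta> $ 2 < \<kappa> * m \<and> x \<theta> $ 4 < m"
    and "- \<tau> \<le> t"
  shows "x t $ 2 < \<kappa> * m \<and> x t $ 4 < m"
proof (cases "t \<le> 0")
  case True
  then show ?thesis using init \<open>- \<tau> \<le> t\<close> by simp
next
  case False
  define g where "g b s = (if b then \<kappa> * m - x s $ 2 else m - x s $ 4)" for b s
  have "0 < g b t" for b
  proof (rule barrier_principle[where I = UNIV and g = g and T = t])
    show "continuous_on {0..t} (g b)" for b
      unfolding g_def by (cases b) (auto intro!: continuous_intros
          continuous_on_subset[OF x_nth_continuous_from[OF order_refl]])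
    show "0 < g b 0" for b using init[of 0] tau unfolding g_def by simp
  next
    fix b t0
    assume "0 < t0" "t0 \<le> t" and before: "\<forall>b\<in>UNIV. \<forall>s\<in>{0..t0}. 0 \<le> g b s" and "g b t0 = 0"
    have upper: "x s $ 2 \<le> \<kappa> * m \<and> x s $ 4 \<le> m" if "s \<in> {-\<tau>..t0}" for s
    proof (cases "s \<le> 0")
      case True
      then show ?thesis using init[of s] that by fastforce
    next
      case False
      then have "0 \<le> g True s" "0 \<le> g False s" using before that by auto
      then show ?thesis unfolding g_def by simp
    qed
    have "- \<tau> \<le> t0 - \<tau>" "t0 - \<tau> \<in> {-\<tau>..t0}" "t0 \<in> {-\<tau>..t0}" "- \<tau> \<le> t0"
      using \<open>0 < t0\<close> tau by auto
    then have "0 < - rhs t0 $ (if b then 2 else 4)"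
      using \<open>g b t0 = 0\<close> upper bounds
      by (cases b) (auto simp: g_def intro: I_h_deriv_neg_at_bound[OF \<open>0 < t0\<close> \<open>0 < m\<close> \<open>0 < Nlo\<close> _ _ _ k1]
          I_v_deriv_neg_at_bound[OF \<open>0 < t0\<close> \<open>0 < m\<close> _ k2])
    moreover have "(g b has_real_derivative - rhs t0 $ (if b then 2 else 4)) (at t0)"
      unfolding g_def using DERIV_diff[OF DERIV_const x_nth_deriv[OF \<open>0 < t0\<close>]] by (cases b) simp_all
    ultimately show "\<exists>l>0. (g b has_real_derivative l) (at t0)" by blast
  qed (use False in auto)
  then show ?thesis unfolding g_def by (metis diff_gt_0_iff_gt)
qed

lemma stability_estimate:
  assumes "0 < \<delta>1" "2 * \<delta>1 < Nstar"
    and k1: "Cvh * (Astar + \<delta>1) < \<kappa> * \<mu>h * (Nstar - 2 * \<delta>1)"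
    and k2: "\<kappa> * Chv * (Nstar + 2 * \<delta>1) < \<mu>v"
    and "0 < m" "\<delta> \<le> \<delta>1" "\<delta> \<le> m" "\<delta> \<le> \<kappa> * m"
    and close: "\<And>\<theta> i. \<theta> \<in> {-\<tau>..0} \<Longrightarrow> \<bar>x \<theta> $ i - E0 \<beta>h \<mu>h \<beta>v \<mu>v $ i\<bar> < \<delta>"
    and "0 \<le> t"
  shows "norm (x t - E0 \<beta>h \<mu>h \<beta>v \<mu>v) < (5 + \<kappa> + \<beta>h * Cvh / (\<mu>h\<^sup>2 * (Nstar - 2 * \<delta>1))) * m"
proof -
  define Nlo where "Nlo = Nstar - 2 * \<delta>1"
  have "0 < Nlo" unfolding Nlo_def using \<open>2 * \<delta>1 < Nstar\<close> by simp
  have init: "\<bar>x \<theta> $ 1 - Astar\<bar> < \<delta>" "x \<theta> $ 2 < \<delta>" "\<bar>Nv \<theta> - Nstar\<bar> < 2 * \<delta>" "x \<theta> $ 4 < \<delta>"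
    if "\<theta> \<in> {-\<tau>..0}" for \<theta>
    using close[OF that, of 1] close[OF that, of 2] close[OF that, of 3] close[OF that, of 4]
    by (auto simp: abs_less_iff)
  have "(0::real) \<in> {-\<tau>..0}" using tau by simp
  have Nv_close: "\<bar>Nv s - Nstar\<bar> < 2 * \<delta>" if "- \<tau> \<le> s" for s
    using init(3)[of s] init(3)[OF \<open>0 \<in> {-\<tau>..0}\<close>] Nv_dist_le[of s] that by (cases "s \<le> 0") auto
  have S_h_upper: "x s $ 1 \<le> Astar + \<delta>1" if "- \<tau> \<le> s" for s
  proof (cases "s \<le> 0")
    case True
    then show ?thesis using init(1)[of s] that \<open>\<delta> \<le> \<delta>1\<close> by (auto simp: abs_less_iff)
  next
    case False
    then show ?thesis
      using S_h_le_max[of s] init(1)[OF \<open>0 \<in> {-\<tau>..0}\<close>] \<open>0 < \<delta>1\<close> \<open>\<delta> \<le> \<delta>1\<close> by (auto simp: abs_less_iff)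
  qed
  have infected: "x s $ 2 < \<kappa> * m \<and> x s $ 4 < m" if "- \<tau> \<le> s" for s
  proof (rule infected_box_invariant[OF \<open>0 < m\<close> \<open>0 < Nlo\<close> _ _ k2 _ that])
    show "x s $ 1 \<le> Astar + \<delta>1 \<and> Nlo \<le> Nv s \<and> Nv s \<le> Nstar + 2 * \<delta>1" if "- \<tau> \<le> s" for s
      using S_h_upper[OF that] Nv_close[OF that] \<open>\<delta> \<le> \<delta>1\<close> unfolding Nlo_def by (auto simp: abs_less_iff)
    show "Cvh * (Astar + \<delta>1) < \<kappa> * \<mu>h * Nlo" using k1 unfolding Nlo_def .
    show "x \<theta> $ 2 < \<kappa> * m \<and> x \<theta> $ 4 < m" if "\<theta> \<in> {-\<tau>..0}" for \<theta>
      using init(2,4)[OF that] \<open>\<delta> \<le> m\<close> \<open>\<delta> \<le> \<kappa> * m\<close> by auto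
  qed
  have "- \<tau> \<le> t" using \<open>0 \<le> t\<close> tau by simp
  have S_h: "\<bar>x t $ 1 - Astar\<bar> < \<delta> + \<beta>h * Cvh * m / (\<mu>h\<^sup>2 * Nlo)"
  proof (rule S_h_dist_lt[OF \<open>0 < Nlo\<close> _ init(1)[OF \<open>0 \<in> {-\<tau>..0}\<close>] \<open>0 \<le> t\<close>])
    show "x s $ 4 \<le> m \<and> Nlo \<le> Nv s" if "0 \<le> s" for s
      using infected[of s] Nv_close[of s] that tau \<open>\<delta> \<le> \<delta>1\<close> unfolding Nlo_def
      by (auto simp: abs_less_iff)
  qed
  have I: "\<bar>x t $ 2\<bar> < \<kappa> * m" "\<bar>x t $ 4\<bar> < m"
    using infected[OF \<open>- \<tau> \<le> t\<close>] x_nonneg[OF \<open>- \<tau> \<le> t\<close>] by auto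
  have S_v: "\<bar>x t $ 3 - Nstar\<bar> < 2 * \<delta> + m"
    using Nv_close[OF \<open>- \<tau> \<le> t\<close>] I(2) by (auto simp: abs_less_iff)
  have "norm (x t - E0 \<beta>h \<mu>h \<beta>v \<mu>v) \<le> \<bar>x t $ 1 - Astar\<bar> + \<bar>x t $ 2\<bar> + \<bar>x t $ 3 - Nstar\<bar> + \<bar>x t $ 4\<bar>"
    by (rule norm_minus_E0_le)
  also have "\<dots> < 3 * \<delta> + (2 + \<kappa>) * m + \<beta>h * Cvh / (\<mu>h\<^sup>2 * Nlo) * m"
    using S_h I S_v by (simp add: algebra_simps)
  also have "\<dots> \<le> (5 + \<kappa> + \<beta>h * Cvh / (\<mu>h\<^sup>2 * Nlo)) * m"
    using \<open>\<delta> \<le> m\<close> by (simp add: algebra_simps)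
  finally show ?thesis unfolding Nlo_def .
qed

end

section \<open>The disease-free equilibrium\<close>

lemma R0_less_1_iff:
  assumes "0 < \<mu>h" "0 < \<mu>v"
  shows "R0 \<beta>h \<mu>h \<mu>v Cvh Chv < 1 \<longleftrightarrow> Cvh * Chv * \<beta>h < \<mu>h\<^sup>2 * \<mu>v"
  unfolding R0_def using assms by (simp add: pos_divide_less_eq)

lemma R0_le_1_iff:
  assumes "0 < \<mu>h" "0 < \<mu>v"
  shows "R0 \<beta>h \<mu>h \<mu>v Cvh Chv \<le> 1 \<longleftrightarrow> Cvh * Chv * \<beta>h \<le> \<mu>h\<^sup>2 * \<mu>v"
  unfolding R0_def using assms by (simp add: pos_divide_le_eq)

lemma globally_attractive_E0:
  assumes "0 < \<beta>h" "0 < \<beta>v" "0 < \<mu>h" "0 < \<mu>v" "0 < Cvh" "0 < Chv" "0 \<le> \<tau>"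
    and "Cvh * Chv * \<beta>h \<le> \<mu>h\<^sup>2 * \<mu>v"
  shows "globally_attractive \<beta>h \<beta>v \<mu>h \<mu>v Cvh Chv \<tau>"
  unfolding globally_attractive_def
proof (intro ballI allI impI)
  fix \<phi> x assume "\<phi> \<in> Cplus \<tau>" "is_solution \<beta>h \<beta>v \<mu>h \<mu>v Cvh Chv \<tau> \<phi> x"
  then interpret vector_host_solution \<beta>h \<beta>v \<mu>h \<mu>v Cvh Chv \<tau> \<phi> x
    using assms by unfold_locales
  show "(x \<longlongrightarrow> E0 \<beta>h \<mu>h \<beta>v \<mu>v) at_top" by (rule x_tendsto_E0) fact
qed

lemma nth_dist_lt_of_supdist:
  assumes "\<phi> \<in> Cplus \<tau>" and "supdist \<tau> \<phi> (\<lambda>_. e) < \<delta>" and "\<theta> \<in> {-\<tau>..0}"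
  shows "\<bar>\<phi> \<theta> $ i - e $ i\<bar> < \<delta>"
proof -
  have "continuous_on {-\<tau>..0} \<phi>" using assms(1) unfolding Cplus_def by auto
  then have "bounded ((\<lambda>\<theta>. norm (\<phi> \<theta> - e)) ` {-\<tau>..0})"
    by (intro compact_imp_bounded compact_continuous_image continuous_intros) auto
  then have "norm (\<phi> \<theta> - e) \<le> supdist \<tau> \<phi> (\<lambda>_. e)"
    unfolding supdist_def using assms(3) by (intro cSUP_upper bounded_imp_bdd_above)
  moreover have "\<bar>\<phi> \<theta> $ i - e $ i\<bar> \<le> norm (\<phi> \<theta> - e)"
    using component_le_norm_cart[of "\<phi> \<theta> - e" i] by simp
  ultimately show ?thesis using assms(2) by linarith
qed

text \<open>At \<open>\<delta>1 = 0\<close> the two thresholds for \<open>\<kappa>\<close> are \<open>Cvh A / (\<mu>h N)\<close> and \<open>\<mu>v / (Chv N)\<close>,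
  which are strictly ordered exactly when \<open>R0 < 1\<close>; continuity leaves room for small \<open>\<delta>1 > 0\<close>.\<close>

lemma barrier_constants_exist:
  fixes A N :: real
  assumes "0 < A" "0 < N" "0 < \<mu>h" "0 < \<mu>v" "0 < Cvh" "0 < Chv"
    and threshold: "Cvh * Chv * A < \<mu>h * \<mu>v"
  obtains \<delta>1 \<kappa> where "0 < \<delta>1" "2 * \<delta>1 < N" "0 < \<kappa>"
    "Cvh * (A + \<delta>1) < \<kappa> * \<mu>h * (N - 2 * \<delta>1)" "\<kappa> * Chv * (N + 2 * \<delta>1) < \<mu>v"
proof -
  define lo where "lo \<delta> = Cvh * (A + \<delta>) / (\<mu>h * (N - 2 * \<delta>))" for \<delta>
  define hi where "hi \<delta> = \<mu>v / (Chv * (N + 2 * \<delta>))" for \<delta>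
  have "((\<lambda>\<delta>. hi \<delta> - lo \<delta>) \<longlongrightarrow> hi 0 - lo 0) (at_right 0)"
    unfolding hi_def lo_def using assms by (intro tendsto_intros) auto
  moreover have "lo 0 < hi 0"
    unfolding hi_def lo_def using assms by (simp add: field_simps)
  ultimately have "eventually (\<lambda>\<delta>. 0 < hi \<delta> - lo \<delta>) (at_right 0)"
    by (intro order_tendstoD(1)) auto
  moreover have "eventually (\<lambda>\<delta>. \<delta> \<in> {0<..<N/2}) (at_right 0)"
    using assms by (intro eventually_at_right_real) simp
  ultimately obtain \<delta>1 where "lo \<delta>1 < hi \<delta>1" "0 < \<delta>1" "2 * \<delta>1 < N"
    using eventually_happens'[OF trivial_limit_at_right_real eventually_conj] by fastforce
  define \<kappa> where "\<kappa> = (lo \<delta>1 + hi \<delta>1) / 2"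
  have "lo \<delta>1 < \<kappa>" "\<kappa> < hi \<delta>1" unfolding \<kappa>_def using \<open>lo \<delta>1 < hi \<delta>1\<close> by simp_all
  have "0 < \<mu>h * (N - 2 * \<delta>1)" "0 < Chv * (N + 2 * \<delta>1)"
    using assms \<open>0 < \<delta>1\<close> \<open>2 * \<delta>1 < N\<close> by simp_all
  have "0 < lo \<delta>1" unfolding lo_def using assms \<open>0 < \<delta>1\<close> \<open>0 < \<mu>h * (N - 2 * \<delta>1)\<close> by simp
  then have "0 < \<kappa>" using \<open>lo \<delta>1 < \<kappa>\<close> by simp
  have "Cvh * (A + \<delta>1) < \<kappa> * (\<mu>h * (N - 2 * \<delta>1))" "\<kappa> * (Chv * (N + 2 * \<delta>1)) < \<mu>v"
    using \<open>lo \<delta>1 < \<kappa>\<close> \<open>\<kappa> < hi \<delta>1\<close> \<open>0 < \<mu>h * (N - 2 * \<delta>1)\<close> \<open>0 < Chv * (N + 2 * \<delta>1)\<close>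
    unfolding lo_def hi_def by (simp_all add: divide_less_eq less_divide_eq)
  with \<open>0 < \<delta>1\<close> \<open>2 * \<delta>1 < N\<close> \<open>0 < \<kappa>\<close> show ?thesis by (intro that) (auto simp: mult.assoc)
qed

lemma locally_stable_E0:
  assumes pos: "0 < \<beta>h" "0 < \<beta>v" "0 < \<mu>h" "0 < \<mu>v" "0 < Cvh" "0 < Chv" "0 \<le> \<tau>"
    and threshold: "Cvh * Chv * \<beta>h < \<mu>h\<^sup>2 * \<mu>v"
  shows "locally_stable \<beta>h \<beta>v \<mu>h \<mu>v Cvh Chv \<tau>"
  unfolding locally_stable_def
proof (intro allI impI)
  fix \<epsilon> :: real assume "0 < \<epsilon>"
  have "Cvh * Chv * (\<beta>h / \<mu>h) < \<mu>h * \<mu>v"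
    using threshold pos by (simp add: field_simps power2_eq_square)
  then obtain \<delta>1 \<kappa> where "0 < \<delta>1" "2 * \<delta>1 < \<beta>v / \<mu>v" "0 < \<kappa>"
    and k: "Cvh * (\<beta>h / \<mu>h + \<delta>1) < \<kappa> * \<mu>h * (\<beta>v / \<mu>v - 2 * \<delta>1)"
      "\<kappa> * Chv * (\<beta>v / \<mu>v + 2 * \<delta>1) < \<mu>v"
    using barrier_constants_exist[of "\<beta>h / \<mu>h" "\<beta>v / \<mu>v" \<mu>h \<mu>v Cvh Chv] pos by auto
  define C where "C = 5 + \<kappa> + \<beta>h * Cvh / (\<mu>h\<^sup>2 * (\<beta>v / \<mu>v - 2 * \<delta>1))"
  have "0 \<le> \<beta>h * Cvh / (\<mu>h\<^sup>2 * (\<beta>v / \<mu>v - 2 * \<delta>1))"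
    using pos \<open>2 * \<delta>1 < \<beta>v / \<mu>v\<close> by (intro divide_nonneg_pos) auto
  then have "0 < C" unfolding C_def using \<open>0 < \<kappa>\<close> by simp
  define m where "m = \<epsilon> / C"
  have "0 < m" unfolding m_def using \<open>0 < \<epsilon>\<close> \<open>0 < C\<close> by simp
  define \<delta> where "\<delta> = min \<delta>1 (min m (\<kappa> * m))"
  show "\<exists>\<delta>>0. \<forall>\<phi>\<in>Cplus \<tau>. \<forall>x. supdist \<tau> \<phi> (\<lambda>_. E0 \<beta>h \<mu>h \<beta>v \<mu>v) < \<delta> \<longrightarrow>
      is_solution \<beta>h \<beta>v \<mu>h \<mu>v Cvh Chv \<tau> \<phi> x \<longrightarrow> (\<forall>t\<ge>0. norm (x t - E0 \<beta>h \<mu>h \<beta>v \<mu>v) < \<epsilon>)"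
  proof (intro exI[of _ \<delta>] conjI ballI allI impI)
    show "0 < \<delta>" unfolding \<delta>_def using \<open>0 < \<delta>1\<close> \<open>0 < m\<close> \<open>0 < \<kappa>\<close> by simp
    fix \<phi> x and t :: real
    assume "\<phi> \<in> Cplus \<tau>" "supdist \<tau> \<phi> (\<lambda>_. E0 \<beta>h \<mu>h \<beta>v \<mu>v) < \<delta>"
      and "is_solution \<beta>h \<beta>v \<mu>h \<mu>v Cvh Chv \<tau> \<phi> x" "0 \<le> t"
    then interpret vector_host_solution \<beta>h \<beta>v \<mu>h \<mu>v Cvh Chv \<tau> \<phi> x
      using pos by unfold_locales
    have "norm (x t - E0 \<beta>h \<mu>h \<beta>v \<mu>v) < C * m"
      unfolding C_def
    proof (rule stability_estimate[OF \<open>0 < \<delta>1\<close> _ k \<open>0 < m\<close> _ _ _ _ \<open>0 \<le> t\<close>])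
      show "\<bar>x \<theta> $ i - E0 \<beta>h \<mu>h \<beta>v \<mu>v $ i\<bar> < \<delta>" if "\<theta> \<in> {-\<tau>..0}" for \<theta> i
        using nth_dist_lt_of_supdist[OF \<open>\<phi> \<in> Cplus \<tau>\<close> \<open>supdist \<tau> \<phi> _ < \<delta>\<close> that] x_init[OF that]
        by simp
    qed (use \<open>2 * \<delta>1 < \<beta>v / \<mu>v\<close> in \<open>auto simp: \<delta>_def\<close>)
    then show "norm (x t - E0 \<beta>h \<mu>h \<beta>v \<mu>v) < \<epsilon>"
      unfolding m_def using \<open>0 < C\<close> by simp
  qed
qed

theorem theorem5:
  fixes \<beta>h \<beta>v \<mu>h \<mu>v Cvh Chv \<tau> :: real
  assumes "0 < \<beta>h" "0 < \<beta>v" "0 < \<mu>h" "0 < \<mu>v" "0 < Cvh" "0 < Chv"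
    and "0 \<le> \<tau>"
  shows "(R0 \<beta>h \<mu>h \<mu>v Cvh Chv < 1 \<longrightarrow> globally_asymptotically_stable \<beta>h \<beta>v \<mu>h \<mu>v Cvh Chv \<tau>)
       \<and> (R0 \<beta>h \<mu>h \<mu>v Cvh Chv = 1 \<longrightarrow> globally_attractive \<beta>h \<beta>v \<mu>h \<mu>v Cvh Chv \<tau>)"
proof (intro conjI impI)
  assume "R0 \<beta>h \<mu>h \<mu>v Cvh Chv < 1"
  then have "Cvh * Chv * \<beta>h < \<mu>h\<^sup>2 * \<mu>v" using R0_less_1_iff assms by blast
  then show "globally_asymptotically_stable \<beta>h \<beta>v \<mu>h \<mu>v Cvh Chv \<tau>"
    unfolding globally_asymptotically_stable_def
    using locally_stable_E0 globally_attractive_E0 assms by (simp add: less_imp_le)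
next
  assume "R0 \<beta>h \<mu>h \<mu>v Cvh Chv = 1"
  then have "Cvh * Chv * \<beta>h \<le> \<mu>h\<^sup>2 * \<mu>v" using R0_le_1_iff assms by (metis order_refl)
  then show "globally_attractive \<beta>h \<beta>v \<mu>h \<mu>v Cvh Chv \<tau>" using globally_attractive_E0 assms by simp
qed

end
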